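(* Fix $n\ge 1$. Let $T=P(x,u_0,\dots,u_n)$ with $P$ a real polynomial, and let $Q$ be the (unique) real polynomial with $T=Q(x,v_0,\dots,v_n)$. Then $P$ does not depend on $x$ if and only if, on the region $u_n\neq0$, $$T=Q(\xi,I_n,I_{n-1},\dots,I_2,0,I_0),$$ i.e. $T$ is obtained from $Q$ by substituting $x\mapsto\xi$ and $v_j\mapsto I_{n-j}$ (with $I_1=0$). In this case, if $T\ne 0$, the deficiency of $T$ relative to $\mathcal P_n$ equals $n$ minus the degree in $\xi$ of $Q(\xi,I_n,\dots,I_2,0,I_0)$, regarded as a polynomial in the algebraically independent quantities $\xi,I_0,I_2,\dots,I_n$.
   Context: Operators are elements of $\mathbb R[x,u_0,\dots,u_n]$ acting on smooth $f$ by $P[f](x)=P(x,f(x),f'(x),\dots,f^{(n)}(x))$. $\mathcal P_s$ denotes real polynomials of degree $\le s$ ($\mathcal P_s=\{0\}$ for $s<0$); deficiency $m$ relative to $\mathcal P_n$ means $T(\mathcal P_n)\subset\mathcal P_{n-m}$ but $T(\mathcal P_n)\not\subset\mathcal P_{n-m-1}$. Define $v_j=\sum_{i=0}^{n-j}(-1)^i\frac{x^i}{i!}u_{i+j}$ for $j=0,\dots,n$; $x,v_0,\dots,v_n$ freely generate $\mathbb R[x,u_0,\dots,u_n]$. On the region $u_n\ne0$ define $\xi=u_{n-1}/u_n$ and $I_{n-j}=\sum_{i=0}^{n-j}(-1)^i u_{i+j}\frac{\xi^i}{i!}$ for $j=0,\dots,n$; thus $I_0=u_n$ and $I_1=0$.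 *)

theory Defs
  imports "HOL-Analysis.Analysis" "HOL-Computational_Algebra.Polynomial" "HOL-Library.Poly_Mapping"
begin

text \<open>Variable 0 plays the role of x; variable Suc i plays the role of u_i (for P),
resp. v_i (for Q).\<close>

type_synonym mpoly = "(nat \<Rightarrow>\<^sub>0 nat) \<Rightarrow>\<^sub>0 real"

definition mp_eval :: "mpoly \<Rightarrow> (nat \<Rightarrow> real) \<Rightarrow> real" where
  "mp_eval p a = (\<Sum>m\<in>Poly_Mapping.keys p. Poly_Mapping.lookup p m * (\<Prod>i\<in>Poly_Mapping.keys (m::nat \<Rightarrow>\<^sub>0 nat). a i ^ Poly_Mapping.lookup m i))"

definition mp_vars_le :: "nat \<Rightarrow> mpoly \<Rightarrow> bool" where
  "mp_vars_le n p \<longleftrightarrow> (\<forall>m\<in>Poly_Mapping.keys p. Poly_Mapping.keys m \<subseteq> {0..Suc n})"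

definition indep_x :: "mpoly \<Rightarrow> bool" where
  "indep_x p \<longleftrightarrow> (\<forall>m\<in>Poly_Mapping.keys p. Poly_Mapping.lookup m 0 = 0)"

definition vfun :: "nat \<Rightarrow> real \<Rightarrow> (nat \<Rightarrow> real) \<Rightarrow> nat \<Rightarrow> real" where
  "vfun n x u j = (\<Sum>i=0..n-j. (-1)^i * x^i / fact i * u (i+j))"

definition xi :: "nat \<Rightarrow> (nat \<Rightarrow> real) \<Rightarrow> real" where
  "xi n u = u (n-1) / u n"

text \<open>I_{n-j} = sum_{i=0}^{n-j} (-1)^i u_{i+j} xi^i/i!, indexed by k = n-j.\<close>
definition Ifun :: "nat \<Rightarrow> (nat \<Rightarrow> real) \<Rightarrow> nat \<Rightarrow> real" where
  "Ifun n u k = (\<Sum>i=0..k. (-1)^i * u (i + (n-k)) * xi n u ^ i / fact i)"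

definition apply_op :: "mpoly \<Rightarrow> (real \<Rightarrow> real) \<Rightarrow> real \<Rightarrow> real" where
  "apply_op P f = (\<lambda>x. mp_eval P (case_nat x (\<lambda>i. (deriv ^^ i) f x)))"

text \<open>P_s: real polynomial functions of degree \<le> s; P_s = {0} for s < 0.\<close>
definition polys_upto :: "int \<Rightarrow> (real \<Rightarrow> real) set" where
  "polys_upto s = {poly p | p. p = 0 \<or> int (degree p) \<le> s}"

definition has_deficiency :: "nat \<Rightarrow> mpoly \<Rightarrow> int \<Rightarrow> bool" where
  "has_deficiency n P m \<longleftrightarrow>
     apply_op P ` polys_upto (int n) \<subseteq> polys_upto (int n - m) \<and>
     \<not> apply_op P ` polys_upto (int n) \<subseteq> polys_upto (int n - m - 1)"

text \<open>Degree in xi of Q(xi, I_n, ..., I_2, 0, I_0), regarded as a formal polynomial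
in the independent variables xi, I_0, I_2, ..., I_n: the substitution renames
x to xi and v_j to I_{n-j} for j \<noteq> n-1 and sets v_{n-1} (variable index n) to 0,
which deletes exactly the monomials of Q containing v_{n-1}.\<close>
definition xi_degree :: "nat \<Rightarrow> mpoly \<Rightarrow> nat" where
  "xi_degree n Q = Max (insert 0 {Poly_Mapping.lookup m 0 | m. m \<in> Poly_Mapping.keys Q \<and> Poly_Mapping.lookup m n = 0})"

end

(*
  If P does not depend on x, then T = P(xi, u) = Q(xi, v(xi, u)), and v_j(xi, u) = I_{n-j}.
  Conversely, if T = Q(xi, I) on u_n ~= 0, then T(x, u) does not depend on x on the positive
  orthant, and a polynomial which is constant in x there has no monomial containing x, by the
  identity theorem for polynomials.

  For f of degree <= n Taylor's formula gives v_j(x, f(x), f'(x), ...) = f^(j)(0), so T maps P_n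
  onto the polynomials Q(X, c) with c in R^(n+1), whose largest degree is the x-degree D of Q;
  the deficiency is n - D. It remains to find a monomial of x-degree D in Q free of v_{n-1}. If P
  does not depend on x, T commutes with translations: Q(X + s, c) = Q(X, c'), where c' is the jet
  at 0 of f(s + .). Choosing s = -c_{n-1}/c_n gives c'_{n-1} = 0 without changing the coefficient
  of X^D. Were v_{n-1} in every monomial of x-degree D, that coefficient would vanish for all c with
  c_n ~= 0, contradicting the identity theorem.
*)

theory Submission
  imports Defs
begin

definition mono_eval :: "(nat \<Rightarrow>\<^sub>0 nat) \<Rightarrow> (nat \<Rightarrow> real) \<Rightarrow> real" where
  "mono_eval m a = (\<Prod>i\<in>Poly_Mapping.keys m. a i ^ Poly_Mapping.lookup m i)"

lemma mp_eval_eq_sum_mono_eval: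
  "mp_eval p a = (\<Sum>m\<in>Poly_Mapping.keys p. Poly_Mapping.lookup p m * mono_eval m a)"
  unfolding mp_eval_def mono_eval_def ..

lemma mono_eval_cong:
  "(\<And>i. i \<in> Poly_Mapping.keys m \<Longrightarrow> a i = b i) \<Longrightarrow> mono_eval m a = mono_eval m b"
  unfolding mono_eval_def by (intro prod.cong) auto

lemma mp_eval_cong:
  "(\<And>m i. m \<in> Poly_Mapping.keys p \<Longrightarrow> i \<in> Poly_Mapping.keys m \<Longrightarrow> a i = b i)
   \<Longrightarrow> mp_eval p a = mp_eval p b"
  unfolding mp_eval_eq_sum_mono_eval by (intro sum.cong refl arg_cong2[where f = "(*)"] mono_eval_cong)

lemma mono_eval_fun_upd:
  "mono_eval m (a(k := x)) = x ^ Poly_Mapping.lookup m k * mono_eval m (a(k := 1))"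
proof (cases "k \<in> Poly_Mapping.keys m")
  case True
  have "mono_eval m (a(k := y)) =
      y ^ Poly_Mapping.lookup m k * (\<Prod>i\<in>Poly_Mapping.keys m - {k}. a i ^ Poly_Mapping.lookup m i)"
    for y
    unfolding mono_eval_def prod.remove[OF finite_keys True] by (auto intro!: prod.cong)
  then show ?thesis
    by simp
next
  case False
  then show ?thesis
    by (auto simp: in_keys_iff intro!: mono_eval_cong)
qed

lemma mono_eval_eq_0:
  "a k = 0 \<Longrightarrow> Poly_Mapping.lookup m k \<noteq> 0 \<Longrightarrow> mono_eval m a = 0"
  using mono_eval_fun_upd[of m a k 0] by (simp add: fun_upd_idem)

lemma base_expansion_unique:
  fixes g h :: "nat \<Rightarrow> nat"
  assumes "\<forall>i. g i < N" "\<forall>i. h i < N"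
    and "(\<Sum>i<K. g i * N ^ i) = (\<Sum>i<K. h i * N ^ i)" "i < K"
  shows "g i = h i"
  using assms
proof (induction K arbitrary: g h i)
  case 0
  then show ?case by simp
next
  case (Suc K)
  have split: "(\<Sum>i<Suc K. f i * N ^ i) = f 0 + N * (\<Sum>i<K. f (Suc i) * N ^ i)" for f
    by (simp only: sum.lessThan_Suc_shift) (simp add: sum_distrib_left mult_ac)
  have "g 0 = (\<Sum>i<Suc K. g i * N ^ i) mod N" "h 0 = (\<Sum>i<Suc K. h i * N ^ i) mod N"
    unfolding split using Suc.prems(1,2) by simp_all
  then have g0: "g 0 = h 0"
    using Suc.prems(3) by simp
  moreover have "N > 0"
    using Suc.prems(1) by (metis gr_zeroI not_less0)
  ultimately have "(\<Sum>i<K. g (Suc i) * N ^ i) = (\<Sum>i<K. h (Suc i) * N ^ i)"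
    using Suc.prems(3) unfolding split by simp
  then show ?case
    using Suc.IH[of "g \<circ> Suc" "h \<circ> Suc"] Suc.prems g0 by (cases i) auto
qed

lemma mono_eval_kronecker:
  assumes "Poly_Mapping.keys m \<subseteq> {..<K}"
  shows "mono_eval m (\<lambda>i. t ^ N ^ i) = t ^ (\<Sum>i<K. Poly_Mapping.lookup m i * N ^ i)"
proof -
  have "mono_eval m (\<lambda>i. t ^ N ^ i) =
      (\<Prod>i\<in>Poly_Mapping.keys m. t ^ (Poly_Mapping.lookup m i * N ^ i))"
    unfolding mono_eval_def by (simp add: power_mult[symmetric] mult.commute)
  also have "\<dots> = (\<Prod>i<K. t ^ (Poly_Mapping.lookup m i * N ^ i))"
    using assms by (intro prod.mono_neutral_left) (auto simp: in_keys_iff)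
  also have "\<dots> = t ^ (\<Sum>i<K. Poly_Mapping.lookup m i * N ^ i)"
    by (simp add: power_sum)
  finally show ?thesis .
qed

lemma kronecker_encoding_inj:
  fixes K N :: nat
  shows "inj_on (\<lambda>m. \<Sum>i<K. Poly_Mapping.lookup m i * N ^ i)
     {m. Poly_Mapping.keys m \<subseteq> {..<K} \<and> (\<forall>i. Poly_Mapping.lookup m i < N)}"
proof (rule inj_onI, rule poly_mapping_eqI)
  fix m m' i
  assume m: "m \<in> {m. Poly_Mapping.keys m \<subseteq> {..<K} \<and> (\<forall>i. Poly_Mapping.lookup m i < N)}"
    and m': "m' \<in> {m. Poly_Mapping.keys m \<subseteq> {..<K} \<and> (\<forall>i. Poly_Mapping.lookup m i < N)}"
    and eq: "(\<Sum>i<K. Poly_Mapping.lookup m i * N ^ i) = (\<Sum>i<K. Poly_Mapping.lookup m' i * N ^ i)"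
  show "Poly_Mapping.lookup m i = Poly_Mapping.lookup m' i"
  proof (cases "i < K")
    case True
    then show ?thesis
      using base_expansion_unique[OF _ _ eq] m m' by blast
  next
    case False
    then have "i \<notin> Poly_Mapping.keys m" "i \<notin> Poly_Mapping.keys m'"
      using m m' by auto
    then show ?thesis
      by (simp add: in_keys_iff)
  qed
qed

lemma exponents_bounded:
  fixes S :: "(nat \<Rightarrow>\<^sub>0 nat) set"
  assumes "finite S"
  obtains K N where "\<And>m. m \<in> S \<Longrightarrow> Poly_Mapping.keys m \<subseteq> {..<K}"
    and "\<And>m i. m \<in> S \<Longrightarrow> Poly_Mapping.lookup m i < N"
proof -
  have "finite (\<Union>m\<in>S. Poly_Mapping.keys m)"
    using assms by simp
  then obtain K where K: "(\<Union>m\<in>S. Poly_Mapping.keys m) \<subseteq> {..<K}"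
    unfolding finite_nat_iff_bounded by blast
  have "finite (insert 0 (\<Union>m\<in>S. Poly_Mapping.lookup m ` Poly_Mapping.keys m))"
    using assms by simp
  then obtain N where N: "insert 0 (\<Union>m\<in>S. Poly_Mapping.lookup m ` Poly_Mapping.keys m) \<subseteq> {..<N}"
    unfolding finite_nat_iff_bounded by blast
  have "Poly_Mapping.lookup m i < N" if "m \<in> S" for m i
  proof (cases "i \<in> Poly_Mapping.keys m")
    case False
    then show ?thesis
      using N by (simp add: in_keys_iff)
  qed (use N that in auto)
  with K that show ?thesis
    by blast
qed

lemma monomial_sum_vanishes_imp_coeff_eq_0:
  fixes c :: "(nat \<Rightarrow>\<^sub>0 nat) \<Rightarrow> real"
  assumes fin: "finite S"
    and vanish: "\<forall>a. (\<forall>i. a i > 0) \<longrightarrow> (\<Sum>m\<in>S. c m * mono_eval m a) = 0"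
    and m0: "m0 \<in> S"
  shows "c m0 = 0"
proof -
  obtain K N where K: "\<And>m. m \<in> S \<Longrightarrow> Poly_Mapping.keys m \<subseteq> {..<K}"
    and N: "\<And>m i. m \<in> S \<Longrightarrow> Poly_Mapping.lookup m i < N"
    using exponents_bounded[OF fin] by blast
  define enc where "enc m = (\<Sum>i<K. Poly_Mapping.lookup m i * N ^ i)" for m
  have enc_inj: "inj_on enc S"
    unfolding enc_def using K N by (blast intro: inj_on_subset[OF kronecker_encoding_inj])
  define q where "q = (\<Sum>m\<in>S. monom (c m) (enc m))"
  have "poly q t = (\<Sum>m\<in>S. c m * mono_eval m (\<lambda>i. t ^ N ^ i))" for t
    unfolding q_def enc_def poly_sum poly_monom using K
    by (intro sum.cong refl arg_cong2[where f = "(*)"] mono_eval_kronecker[symmetric]) auto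
  then have "{0<..} \<subseteq> {t. poly q t = 0}"
    using vanish by auto
  then have "q = 0"
    using poly_roots_finite infinite_Ioi finite_subset by blast
  moreover have "coeff q (enc m0) = (\<Sum>m\<in>S. if m = m0 then c m else 0)"
    unfolding q_def coeff_sum using inj_onD[OF enc_inj _ _ m0]
    by (intro sum.cong refl) auto
  ultimately show ?thesis
    using fin m0 by simp
qed

lemma case_nat_head_tail: "case_nat (a 0) (\<lambda>j. a (Suc j)) = a"
  by (rule ext) (simp split: nat.split)

definition x_poly :: "mpoly \<Rightarrow> (nat \<Rightarrow> real) \<Rightarrow> real poly" where
  "x_poly p c = (\<Sum>m\<in>Poly_Mapping.keys p.
     monom (Poly_Mapping.lookup p m * mono_eval m (case_nat 1 c)) (Poly_Mapping.lookup m 0))"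

lemma mono_eval_case_nat:
  "mono_eval m (case_nat x c) = x ^ Poly_Mapping.lookup m 0 * mono_eval m (case_nat 1 c)"
proof -
  have "case_nat x c = (case_nat 1 c)(0 := x)" "case_nat 1 c = (case_nat 1 c)(0 := 1)"
    by (auto split: nat.split)
  then show ?thesis
    by (metis mono_eval_fun_upd)
qed

lemma poly_x_poly: "poly (x_poly p c) x = mp_eval p (case_nat x c)"
  unfolding x_poly_def mp_eval_eq_sum_mono_eval
  by (simp add: poly_sum poly_monom mono_eval_case_nat[of _ x] mult_ac)

lemma coeff_x_poly:
  "coeff (x_poly p c) k = (\<Sum>m\<in>{m \<in> Poly_Mapping.keys p. Poly_Mapping.lookup m 0 = k}.
     Poly_Mapping.lookup p m * mono_eval m (case_nat 1 c))"
  unfolding x_poly_def by (simp add: coeff_sum sum.inter_filter eq_commute)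

lemma x_poly_cong:
  assumes "mp_vars_le n p" "\<And>j. j \<le> n \<Longrightarrow> c j = c' j"
  shows "x_poly p c = x_poly p c'"
  unfolding x_poly_def
proof (intro sum.cong refl arg_cong2[where f = monom] arg_cong2[where f = "(*)"] mono_eval_cong)
  fix m i
  assume "m \<in> Poly_Mapping.keys p" "i \<in> Poly_Mapping.keys m"
  then have "i \<le> Suc n"
    using assms(1) unfolding mp_vars_le_def by (meson atLeastAtMost_iff subsetD)
  then show "case_nat 1 c i = case_nat 1 c' i"
    using assms(2) by (cases i) auto
qed

lemma x_poly_coeff_nonzero:
  assumes m: "m \<in> Poly_Mapping.keys p"
  shows "\<exists>c. (\<forall>i. c i > 0) \<and> coeff (x_poly p c) (Poly_Mapping.lookup m 0) \<noteq> 0"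
proof (rule ccontr)
  define k where "k = Poly_Mapping.lookup m 0"
  define S where "S = {m \<in> Poly_Mapping.keys p. Poly_Mapping.lookup m 0 = k}"
  assume "\<nexists>c. (\<forall>i. c i > 0) \<and> coeff (x_poly p c) (Poly_Mapping.lookup m 0) \<noteq> 0"
  then have coeff_0: "coeff (x_poly p c) k = 0" if "\<forall>i. c i > 0" for c
    using that unfolding k_def by blast
  have "(\<Sum>m\<in>S. Poly_Mapping.lookup p m * mono_eval m a) = 0" if "\<forall>i. a i > 0" for a
  proof -
    have "(\<Sum>m\<in>S. Poly_Mapping.lookup p m * mono_eval m a)
        = a 0 ^ k * coeff (x_poly p (\<lambda>j. a (Suc j))) k"
      unfolding coeff_x_poly S_def sum_distrib_left
    proof (intro sum.cong refl)
      fix m'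
      assume "m' \<in> {m \<in> Poly_Mapping.keys p. Poly_Mapping.lookup m 0 = k}"
      then have "mono_eval m' a = a 0 ^ k * mono_eval m' (case_nat 1 (\<lambda>j. a (Suc j)))"
        using mono_eval_case_nat[of m' "a 0" "\<lambda>j. a (Suc j)"] by (simp add: case_nat_head_tail)
      then show "Poly_Mapping.lookup p m' * mono_eval m' a =
          a 0 ^ k * (Poly_Mapping.lookup p m' * mono_eval m' (case_nat 1 (\<lambda>j. a (Suc j))))"
        by simp
    qed
    then show ?thesis
      using coeff_0 that by simp
  qed
  then have "Poly_Mapping.lookup p m = 0"
    by (intro monomial_sum_vanishes_imp_coeff_eq_0[of S]) (auto simp: S_def k_def m)
  then show False
    using m by (simp add: in_keys_iff)
qed

definition x_degree :: "mpoly \<Rightarrow> nat" where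
  "x_degree p = Max (insert 0 ((\<lambda>m. Poly_Mapping.lookup m 0) ` Poly_Mapping.keys p))"

lemma lookup_le_x_degree: "m \<in> Poly_Mapping.keys p \<Longrightarrow> Poly_Mapping.lookup m 0 \<le> x_degree p"
  unfolding x_degree_def by (intro Max_ge) auto

lemma x_degree_attained:
  assumes "p \<noteq> 0"
  shows "\<exists>m\<in>Poly_Mapping.keys p. Poly_Mapping.lookup m 0 = x_degree p"
proof -
  have "x_degree p = Max ((\<lambda>m. Poly_Mapping.lookup m 0) ` Poly_Mapping.keys p)"
    unfolding x_degree_def using assms by (simp add: Max_insert)
  also have "\<dots> \<in> (\<lambda>m. Poly_Mapping.lookup m 0) ` Poly_Mapping.keys p"
    using assms by (intro Max_in) auto
  finally show ?thesis
    by auto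
qed

lemma degree_x_poly_le: "degree (x_poly p c) \<le> x_degree p"
  unfolding x_poly_def
  by (intro degree_sum_le) (auto intro: order.trans[OF degree_monom_le] lookup_le_x_degree)

lemma mpoly_eq_0_if_eval_eq_0:
  assumes "\<And>x u. mp_eval p (case_nat x u) = 0"
  shows "p = 0"
proof (rule ccontr)
  assume "p \<noteq> 0"
  then obtain m where "m \<in> Poly_Mapping.keys p"
    by (metis all_not_in_conv keys_eq_empty)
  then obtain c where "coeff (x_poly p c) (Poly_Mapping.lookup m 0) \<noteq> 0"
    using x_poly_coeff_nonzero by blast
  moreover have "x_poly p c = 0"
    using assms by (simp add: poly_x_poly flip: poly_all_0_iff_0)
  ultimately show False
    by simp
qed

lemma mp_eval_indep_x:
  assumes "indep_x p"
  shows "mp_eval p (case_nat x u) = mp_eval p (case_nat y u)"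
proof (rule mp_eval_cong)
  fix m i
  assume "m \<in> Poly_Mapping.keys p" "i \<in> Poly_Mapping.keys m"
  then have "i \<noteq> 0"
    using assms unfolding indep_x_def by (metis in_keys_iff)
  then show "case_nat x u i = case_nat y u i"
    by (cases i) auto
qed

lemma indep_xI:
  assumes "\<And>x y u. (\<forall>i. u i > 0) \<Longrightarrow> mp_eval p (case_nat x u) = mp_eval p (case_nat y u)"
  shows "indep_x p"
  unfolding indep_x_def
proof (rule ballI, rule ccontr)
  fix m
  assume "m \<in> Poly_Mapping.keys p" and k: "Poly_Mapping.lookup m 0 \<noteq> 0"
  then obtain c where c: "\<forall>i. c i > 0" "coeff (x_poly p c) (Poly_Mapping.lookup m 0) \<noteq> 0"
    using x_poly_coeff_nonzero by blast
  have "poly (x_poly p c) = poly [:poly (x_poly p c) 0:]"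
    using assms[OF c(1)] by (simp add: poly_x_poly fun_eq_iff)
  then obtain a where "x_poly p c = [:a:]"
    by (simp only: poly_eq_poly_eq_iff)
  then have "coeff (x_poly p c) (Poly_Mapping.lookup m 0) = 0"
    using k by (cases "Poly_Mapping.lookup m 0") simp_all
  then show False
    using c(2) by simp
qed

lemma vfun_xi: "j \<le> n \<Longrightarrow> vfun n (xi n u) u j = Ifun n u (n - j)"
  unfolding vfun_def Ifun_def by (intro sum.cong) (auto simp: algebra_simps)

lemma indep_x_iff_eval_at_xi:
  assumes varsQ: "mp_vars_le n Q"
    and PQ: "\<forall>x u. mp_eval P (case_nat x u) = mp_eval Q (case_nat x (vfun n x u))"
  shows "indep_x P \<longleftrightarrow> (\<forall>x u. u n \<noteq> 0 \<longrightarrow>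
    mp_eval P (case_nat x u) = mp_eval Q (case_nat (xi n u) (\<lambda>j. Ifun n u (n - j))))"
proof (intro iffI allI impI)
  fix x u
  assume "indep_x P"
  then have "mp_eval P (case_nat x u) = mp_eval P (case_nat (xi n u) u)"
    by (rule mp_eval_indep_x)
  also have "\<dots> = poly (x_poly Q (vfun n (xi n u) u)) (xi n u)"
    using PQ by (simp add: poly_x_poly)
  also have "x_poly Q (vfun n (xi n u) u) = x_poly Q (\<lambda>j. Ifun n u (n - j))"
    using varsQ by (rule x_poly_cong) (rule vfun_xi)
  finally show "mp_eval P (case_nat x u) = mp_eval Q (case_nat (xi n u) (\<lambda>j. Ifun n u (n - j)))"
    by (simp add: poly_x_poly)
next
  assume "\<forall>x u. u n \<noteq> 0 \<longrightarrow>
    mp_eval P (case_nat x u) = mp_eval Q (case_nat (xi n u) (\<lambda>j. Ifun n u (n - j)))"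
  then show "indep_x P"
    by (intro indep_xI) (metis less_irrefl)
qed

lemma higher_deriv_poly: "(deriv ^^ i) (poly p) = poly ((pderiv ^^ i) p)"
  for p :: "'a::real_normed_field poly"
  by (induction i) (auto intro!: DERIV_imp_deriv poly_DERIV)

lemma higher_deriv_translate: "(deriv ^^ i) (\<lambda>x. f (s + x)) x = (deriv ^^ i) f (s + x)"
  by (simp add: higher_deriv_shift_0[of i _ x] higher_deriv_shift_0[of i _ "s + x"] o_def add.assoc)

lemma higher_pderiv_pcompose_linear:
  "(pderiv ^^ i) (pcompose p [:s, 1:]) = pcompose ((pderiv ^^ i) p) [:s, 1:]"
  by (induction i) (auto simp: pderiv_pcompose pderiv_pCons)

lemma higher_pderiv_eq_0: "degree p < i \<Longrightarrow> (pderiv ^^ i) p = 0"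
  for p :: "'a::{comm_semiring_1,semiring_no_zero_divisors} poly"
  by (simp add: poly_eq_iff coeff_higher_pderiv coeff_eq_0)

lemma coeff_pcompose_linear_top:
  fixes q :: "'a::idom poly"
  assumes "degree q \<le> d"
  shows "coeff (pcompose q [:s, 1:]) d = coeff q d"
proof (cases "degree q = d")
  case True
  then show ?thesis
    using lead_coeff_comp[of "[:s, 1:]" q] by (simp add: degree_pcompose)
next
  case False
  then show ?thesis
    using assms by (simp add: coeff_eq_0 degree_pcompose)
qed

lemma poly_taylor:
  fixes q :: "real poly"
  assumes "degree q \<le> k"
  shows "poly q y = (\<Sum>i\<le>k. poly ((pderiv ^^ i) q) x / fact i * (y - x) ^ i)"
proof (cases "y = x")
  case True
  then show ?thesis
    by (simp add: power_0_left sum.atMost_shift del: sum.atMost_Suc)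
next
  case False
  have "\<forall>m t. m < Suc k \<and> min x y \<le> t \<and> t \<le> max x y \<longrightarrow>
      DERIV (\<lambda>t. poly ((pderiv ^^ m) q) t) t :> poly ((pderiv ^^ Suc m) q) t"
    by simp
  then obtain t where "poly q y = (\<Sum>i<Suc k. poly ((pderiv ^^ i) q) x / fact i * (y - x) ^ i)
      + poly ((pderiv ^^ Suc k) q) t / fact (Suc k) * (y - x) ^ Suc k"
    using Taylor[of "Suc k" "\<lambda>i. poly ((pderiv ^^ i) q)" "poly q" "min x y" "max x y" x y] False
    by auto
  moreover have "(pderiv ^^ Suc k) q = 0"
    using assms by (intro higher_pderiv_eq_0) simp
  ultimately show ?thesis
    by (simp add: lessThan_Suc_atMost del: funpow.simps)
qed

definition jet0 :: "real poly \<Rightarrow> nat \<Rightarrow> real" where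
  "jet0 p j = poly ((pderiv ^^ j) p) 0"

lemma jet0_eq: "jet0 p j = fact j * coeff p j"
  by (simp add: jet0_def poly_0_coeff_0 coeff_higher_pderiv pochhammer_fact)

lemma jet0_surj: "\<exists>p. degree p \<le> n \<and> (\<forall>j\<le>n. jet0 p j = c j)"
proof (intro exI conjI allI impI)
  define p where "p = (\<Sum>j\<le>n. monom (c j / fact j) j)"
  have coeff_p: "coeff p j = (if j \<le> n then c j / fact j else 0)" for j
    unfolding p_def by (simp add: coeff_sum)
  show "degree p \<le> n"
    by (rule degree_le) (simp add: coeff_p)
  show "jet0 p j = c j" if "j \<le> n" for j
    using that by (simp add: jet0_eq coeff_p)
qed

lemma vfun_higher_derivs:
  assumes "degree p \<le> n" "j \<le> n"
  shows "vfun n x (\<lambda>i. poly ((pderiv ^^ i) p) x) j = jet0 p j"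
proof -
  have "degree ((pderiv ^^ j) p) \<le> n - j"
    using assms(1) by (simp add: degree_higher_pderiv)
  then have "jet0 p j = (\<Sum>i\<le>n - j. poly ((pderiv ^^ i) ((pderiv ^^ j) p)) x / fact i * (0 - x) ^ i)"
    unfolding jet0_def by (rule poly_taylor)
  also have "\<dots> = vfun n x (\<lambda>i. poly ((pderiv ^^ i) p) x) j"
    unfolding vfun_def atLeast0AtMost
    by (intro sum.cong refl) (simp add: funpow_add power_minus[of x])
  finally show ?thesis ..
qed

lemma jet0_translate:
  assumes "degree p \<le> Suc k"
  shows "jet0 (pcompose p [:s, 1:]) k = jet0 p k + jet0 p (Suc k) * s"
proof -
  have "degree ((pderiv ^^ k) p) \<le> 1"
    using assms by (simp add: degree_higher_pderiv)
  then have "poly ((pderiv ^^ k) p) s = (\<Sum>i\<le>1. poly ((pderiv ^^ i) ((pderiv ^^ k) p)) 0 / fact i * (s - 0) ^ i)"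
    by (rule poly_taylor)
  then show ?thesis
    by (simp add: jet0_def higher_pderiv_pcompose_linear poly_pcompose funpow_swap1)
qed

lemma apply_op_poly:
  assumes varsQ: "mp_vars_le n Q"
    and PQ: "\<forall>x u. mp_eval P (case_nat x u) = mp_eval Q (case_nat x (vfun n x u))"
    and deg: "degree p \<le> n"
  shows "apply_op P (poly p) = poly (x_poly Q (jet0 p))"
proof
  fix x
  have "apply_op P (poly p) x = poly (x_poly Q (vfun n x (\<lambda>i. poly ((pderiv ^^ i) p) x))) x"
    using PQ by (simp add: apply_op_def higher_deriv_poly poly_x_poly)
  also have "x_poly Q (vfun n x (\<lambda>i. poly ((pderiv ^^ i) p) x)) = x_poly Q (jet0 p)"
    using varsQ by (rule x_poly_cong) (rule vfun_higher_derivs[OF deg])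
  finally show "apply_op P (poly p) x = poly (x_poly Q (jet0 p)) x" .
qed

lemma apply_op_image:
  assumes varsQ: "mp_vars_le n Q"
    and PQ: "\<forall>x u. mp_eval P (case_nat x u) = mp_eval Q (case_nat x (vfun n x u))"
  shows "apply_op P ` polys_upto (int n) = range (\<lambda>c. poly (x_poly Q c))"
proof (intro equalityI subsetI)
  fix g
  assume "g \<in> apply_op P ` polys_upto (int n)"
  then obtain p where "g = apply_op P (poly p)" "degree p \<le> n"
    unfolding polys_upto_def by force
  then show "g \<in> range (\<lambda>c. poly (x_poly Q c))"
    using apply_op_poly[OF varsQ PQ] by blast
next
  fix g
  assume "g \<in> range (\<lambda>c. poly (x_poly Q c))"
  then obtain c where g: "g = poly (x_poly Q c)"
    by blast
  obtain p where p: "degree p \<le> n" "\<forall>j\<le>n. jet0 p j = c j"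
    using jet0_surj by blast
  have "g = apply_op P (poly p)"
    unfolding g apply_op_poly[OF varsQ PQ p(1)] using varsQ p(2) by (metis x_poly_cong)
  moreover have "poly p \<in> polys_upto (int n)"
    unfolding polys_upto_def using p(1) by auto
  ultimately show "g \<in> apply_op P ` polys_upto (int n)"
    by blast
qed

lemma poly_in_polys_upto_iff: "poly q \<in> polys_upto s \<longleftrightarrow> q = 0 \<or> int (degree q) \<le> s"
  by (auto simp: polys_upto_def poly_eq_poly_eq_iff)

lemma has_deficiency_x_degree:
  assumes varsQ: "mp_vars_le n Q"
    and PQ: "\<forall>x u. mp_eval P (case_nat x u) = mp_eval Q (case_nat x (vfun n x u))"
    and "Q \<noteq> 0"
  shows "has_deficiency n P (int n - int (x_degree Q))"
proof -
  obtain m where "m \<in> Poly_Mapping.keys Q" "Poly_Mapping.lookup m 0 = x_degree Q"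
    using x_degree_attained[OF \<open>Q \<noteq> 0\<close>] by blast
  then obtain c where c: "coeff (x_poly Q c) (x_degree Q) \<noteq> 0"
    using x_poly_coeff_nonzero by metis
  then have "x_poly Q c \<noteq> 0" "x_degree Q \<le> degree (x_poly Q c)"
    by (auto intro: le_degree)
  then have "poly (x_poly Q c) \<notin> polys_upto (int (x_degree Q) - 1)"
    by (simp add: poly_in_polys_upto_iff)
  moreover have "range (\<lambda>c. poly (x_poly Q c)) \<subseteq> polys_upto (int (x_degree Q))"
    using degree_x_poly_le by (auto simp: poly_in_polys_upto_iff)
  ultimately show ?thesis
    unfolding has_deficiency_def apply_op_image[OF varsQ PQ] by auto
qed

lemma apply_op_translate:
  assumes "indep_x P"
  shows "apply_op P (\<lambda>x. f (s + x)) x = apply_op P f (s + x)"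
  unfolding apply_op_def higher_deriv_translate using assms by (rule mp_eval_indep_x)

lemma x_poly_jet0_translate:
  assumes varsQ: "mp_vars_le n Q"
    and PQ: "\<forall>x u. mp_eval P (case_nat x u) = mp_eval Q (case_nat x (vfun n x u))"
    and indep: "indep_x P"
    and deg: "degree p \<le> n"
  shows "x_poly Q (jet0 (pcompose p [:s, 1:])) = pcompose (x_poly Q (jet0 p)) [:s, 1:]"
proof -
  have "degree (pcompose p [:s, 1:]) \<le> n"
    using deg by (simp add: degree_pcompose)
  moreover have "poly (pcompose p [:s, 1:]) = (\<lambda>x. poly p (s + x))"
    by (simp add: poly_pcompose fun_eq_iff)
  ultimately have "poly (x_poly Q (jet0 (pcompose p [:s, 1:]))) x = apply_op P (\<lambda>x. poly p (s + x)) x" for x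
    using apply_op_poly[OF varsQ PQ] by metis
  also have "apply_op P (\<lambda>x. poly p (s + x)) x = poly (pcompose (x_poly Q (jet0 p)) [:s, 1:]) x" for x
    using apply_op_translate[OF indep] apply_op_poly[OF varsQ PQ deg] by (simp add: poly_pcompose)
  finally show ?thesis
    by (simp add: poly_eq_poly_eq_iff[symmetric] fun_eq_iff)
qed

lemma top_x_monomial_avoids_var:
  assumes n1: "n \<ge> 1"
    and varsQ: "mp_vars_le n Q"
    and PQ: "\<forall>x u. mp_eval P (case_nat x u) = mp_eval Q (case_nat x (vfun n x u))"
    and indep: "indep_x P"
    and "Q \<noteq> 0"
  shows "\<exists>m\<in>Poly_Mapping.keys Q. Poly_Mapping.lookup m 0 = x_degree Q \<and> Poly_Mapping.lookup m n = 0"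
proof (rule ccontr)
  define D where "D = x_degree Q"
  assume "\<not> ?thesis"
  then have top_has_var: "Poly_Mapping.lookup m n \<noteq> 0"
    if "m \<in> Poly_Mapping.keys Q" "Poly_Mapping.lookup m 0 = D" for m
    using that unfolding D_def by auto
  obtain m0 where "m0 \<in> Poly_Mapping.keys Q" "Poly_Mapping.lookup m0 0 = D"
    using x_degree_attained[OF \<open>Q \<noteq> 0\<close>] unfolding D_def by blast
  then obtain c where c: "\<forall>i. c i > 0" "coeff (x_poly Q c) D \<noteq> 0"
    using x_poly_coeff_nonzero by metis
  obtain p where p: "degree p \<le> n" "\<forall>j\<le>n. jet0 p j = c j"
    using jet0_surj by blast
  define s where "s = - c (n - 1) / c n"
  define p' where "p' = pcompose p [:s, 1:]"
  have "jet0 p' (n - 1) = c (n - 1) + c n * s"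
    using jet0_translate[of p "n - 1" s] p n1 unfolding p'_def by simp
  then have "jet0 p' (n - 1) = 0"
    using c(1) unfolding s_def by (simp add: less_imp_neq[symmetric])
  then have "case_nat 1 (jet0 p') n = 0"
    using n1 by (cases n) auto
  then have "coeff (x_poly Q (jet0 p')) D = 0"
    unfolding coeff_x_poly using top_has_var by (auto intro!: sum.neutral mono_eval_eq_0)
  moreover have "x_poly Q (jet0 p') = pcompose (x_poly Q c) [:s, 1:]"
    unfolding p'_def x_poly_jet0_translate[OF varsQ PQ indep p(1)]
    using varsQ p(2) by (metis x_poly_cong)
  then have "coeff (x_poly Q (jet0 p')) D = coeff (x_poly Q c) D"
    unfolding D_def by (simp add: coeff_pcompose_linear_top degree_x_poly_le)
  ultimately show False
    using c(2) by simp
qed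

lemma xi_degree_eq_x_degree:
  assumes "\<exists>m\<in>Poly_Mapping.keys Q. Poly_Mapping.lookup m 0 = x_degree Q \<and> Poly_Mapping.lookup m n = 0"
  shows "xi_degree n Q = x_degree Q"
  unfolding xi_degree_def
proof (rule Max_eqI)
  show "finite (insert 0 {Poly_Mapping.lookup m 0 |m. m \<in> Poly_Mapping.keys Q \<and> Poly_Mapping.lookup m n = 0})"
    by simp
  show "x_degree Q \<in> insert 0 {Poly_Mapping.lookup m 0 |m. m \<in> Poly_Mapping.keys Q \<and> Poly_Mapping.lookup m n = 0}"
    using assms by force
qed (auto intro: lookup_le_x_degree)

theorem mainTheorem2:
  fixes n :: nat and P Q :: mpoly
  assumes n1: "n \<ge> 1"
    and varsP: "mp_vars_le n P"
    and varsQ: "mp_vars_le n Q"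
    and PQ: "\<forall>x u. mp_eval P (case_nat x u) = mp_eval Q (case_nat x (vfun n x u))"
  shows "(indep_x P \<longleftrightarrow>
           (\<forall>x u. u n \<noteq> 0 \<longrightarrow>
              mp_eval P (case_nat x u) = mp_eval Q (case_nat (xi n u) (\<lambda>j. Ifun n u (n - j)))))
       \<and> (indep_x P \<and> P \<noteq> 0 \<longrightarrow> has_deficiency n P (int n - int (xi_degree n Q)))"
proof (intro conjI impI)
  show "indep_x P \<longleftrightarrow> (\<forall>x u. u n \<noteq> 0 \<longrightarrow>
      mp_eval P (case_nat x u) = mp_eval Q (case_nat (xi n u) (\<lambda>j. Ifun n u (n - j))))"
    using varsQ PQ by (rule indep_x_iff_eval_at_xi)
next
  assume "indep_x P \<and> P \<noteq> 0"
  then have indep: "indep_x P" and "P \<noteq> 0"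
    by auto
  have "Q \<noteq> 0"
  proof
    assume "Q = 0"
    then have "P = 0"
      using PQ by (intro mpoly_eq_0_if_eval_eq_0) (simp add: mp_eval_def)
    then show False
      using \<open>P \<noteq> 0\<close> by simp
  qed
  then have "xi_degree n Q = x_degree Q"
    using top_x_monomial_avoids_var[OF n1 varsQ PQ indep] by (intro xi_degree_eq_x_degree)
  then show "has_deficiency n P (int n - int (xi_degree n Q))"
    using has_deficiency_x_degree[OF varsQ PQ \<open>Q \<noteq> 0\<close>] by simp
qed

end
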